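(* Let $\{(\mathbf{x}_i,y_i)\}_{i=1}^n\subset\mathbb{R}^p\times\mathbb{R}$, $s>0$, and let $\mathcal{K}$ be a Mercer kernel. For $\lambda>0$ consider $$\Psi(\widetilde C)=\frac1{n^2}\sum_{i,j=1}^n\omega^s_{i,j}\big(y_i-y_j+(\mathbf{x}_j-\mathbf{x}_i)^T\widetilde C\mathbf{k}_i^{1/2}\big)^2+\lambda\sum_{j=1}^p\|\widetilde{\mathbf{c}}^j\|_2,\qquad \widetilde C\in\mathbb{R}^{p\times n}.$$ Let $$\lambda_{\max}=\max_{1\le k\le p}\frac2{n^2}\Big\|\sum_{i,j=1}^n\omega^s_{i,j}(y_i-y_j)(x_i^k-x_j^k)\mathbf{k}_i^{1/2}\Big\|_2.$$ Then for all $\lambda\ge\lambda_{\max}$, the optimal solution of $\min_{\widetilde C}\Psi(\widetilde C)$ is $\widetilde C=0$ (the zero $p\times n$ matrix minimizes $\Psi$).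
   Context: $\omega^s_{i,j}=\exp(-\|\mathbf{x}_j-\mathbf{x}_i\|^2/(2s^2))$; $x_i^k$ is the $k$-th coordinate of $\mathbf{x}_i$. $K=[\mathcal{K}(\mathbf{x}_i,\mathbf{x}_j)]_{i,j=1}^n$, $K^{1/2}$ its symmetric positive semidefinite square root, $\mathbf{k}_i^{1/2}$ the $i$-th column of $K^{1/2}$; $\widetilde{\mathbf{c}}^j$ is the $j$-th row of $\widetilde C$ and $\|\cdot\|_2$ the Euclidean norm. *)

theory Defs
  imports "HOL-Analysis.Analysis"
begin

definition mercer_kernel :: "(real^'p \<Rightarrow> real^'p \<Rightarrow> real) \<Rightarrow> bool" where
  "mercer_kernel Kf \<longleftrightarrow>
     continuous_on UNIV (\<lambda>z. Kf (fst z) (snd z)) \<and>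
     (\<forall>u v. Kf u v = Kf v u) \<and>
     (\<forall>(m::nat) (z::nat \<Rightarrow> real^'p) (c::nat \<Rightarrow> real).
        (\<Sum>i<m. \<Sum>j<m. c i * c j * Kf (z i) (z j)) \<ge> 0)"

definition gweight :: "real \<Rightarrow> real^'p \<Rightarrow> real^'p \<Rightarrow> real" where
  "gweight s xi xj = exp (- (norm (xj - xi))\<^sup>2 / (2 * s\<^sup>2))"

definition gram :: "(real^'p \<Rightarrow> real^'p \<Rightarrow> real) \<Rightarrow> ('n \<Rightarrow> real^'p) \<Rightarrow> real^'n^'n" where
  "gram Kf x = (\<chi> i j. Kf (x i) (x j))"

definition psd_matrix :: "real^'n^'n \<Rightarrow> bool" where
  "psd_matrix M \<longleftrightarrow> transpose M = M \<and> (\<forall>v. v \<bullet> (M *v v) \<ge> 0)"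

definition is_psd_sqrt :: "real^'n^'n \<Rightarrow> real^'n^'n \<Rightarrow> bool" where
  "is_psd_sqrt R M \<longleftrightarrow> psd_matrix R \<and> R ** R = M"

definition col_of :: "real^'n^'m \<Rightarrow> 'n \<Rightarrow> real^'m" where
  "col_of R i = (\<chi> j. R $ j $ i)"

definition Psi :: "real \<Rightarrow> real \<Rightarrow> ('n::finite \<Rightarrow> real^'p) \<Rightarrow> ('n \<Rightarrow> real) \<Rightarrow> real^'n^'n
                    \<Rightarrow> real^'n^'p \<Rightarrow> real" where
  "Psi s lam x y R C =
     1 / (real CARD('n))\<^sup>2 * (\<Sum>i\<in>UNIV. \<Sum>j\<in>UNIV.
        gweight s (x i) (x j) * (y i - y j + (x j - x i) \<bullet> (C *v col_of R i))\<^sup>2)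
     + lam * (\<Sum>j\<in>UNIV. norm (C $ j))"

definition lambda_max :: "real \<Rightarrow> ('n::finite \<Rightarrow> real^'p::finite) \<Rightarrow> ('n \<Rightarrow> real) \<Rightarrow> real^'n^'n \<Rightarrow> real" where
  "lambda_max s x y R =
     Max (range (\<lambda>k::'p. 2 / (real CARD('n))\<^sup>2 *
        norm (\<Sum>i\<in>UNIV. \<Sum>j\<in>UNIV.
           (gweight s (x i) (x j) * (y i - y j) * (x i $ k - x j $ k)) *\<^sub>R col_of R i)))"

end

theory Submission
  imports Defs
begin

text \<open>
  Expanding the square gives \<open>\<Psi> C \<ge> \<Psi> 0 - \<Sum>\<^sub>k \<langle>c\<^sup>k, g\<^sub>k\<rangle> + \<lambda> \<Sum>\<^sub>k \<parallel>c\<^sup>k\<parallel>\<close>,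
  where \<open>g\<^sub>k\<close> is the \<open>k\<close>-th row of the negative gradient of the data term at \<open>0\<close>.
  By Cauchy-Schwarz each linear term is dominated by the penalty of its row as soon as
  \<open>\<lambda> \<ge> \<parallel>g\<^sub>k\<parallel>\<close>, and \<open>\<lambda>\<^sub>m\<^sub>a\<^sub>x\<close> is exactly \<open>max\<^sub>k \<parallel>g\<^sub>k\<parallel>\<close>.
\<close>

lemma weighted_sum_square_ge_linearization:
  fixes w a b :: "'i \<Rightarrow> real"
  assumes "\<And>i. i \<in> I \<Longrightarrow> w i \<ge> 0"
  shows "(\<Sum>i\<in>I. w i * (a i)\<^sup>2) + 2 * (\<Sum>i\<in>I. w i * a i * b i) \<le> (\<Sum>i\<in>I. w i * (a i + b i)\<^sup>2)"
proof -
  have "w i * (a i)\<^sup>2 + 2 * (w i * a i * b i) \<le> w i * (a i + b i)\<^sup>2" if "i \<in> I" for i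
  proof -
    have "w i * (a i + b i)\<^sup>2 = w i * (a i)\<^sup>2 + 2 * (w i * a i * b i) + w i * (b i)\<^sup>2"
      by (simp add: power2_eq_square algebra_simps)
    then show ?thesis using assms[OF that] by simp
  qed
  then have "(\<Sum>i\<in>I. w i * (a i)\<^sup>2 + 2 * (w i * a i * b i)) \<le> (\<Sum>i\<in>I. w i * (a i + b i)\<^sup>2)"
    by (rule sum_mono)
  then show ?thesis by (simp add: sum.distrib sum_distrib_left)
qed

lemma sum_inner_le_sum_norm:
  fixes u g :: "'k \<Rightarrow> 'a::real_inner"
  assumes "\<And>k. k \<in> K \<Longrightarrow> norm (g k) \<le> lam"
  shows "(\<Sum>k\<in>K. u k \<bullet> g k) \<le> lam * (\<Sum>k\<in>K. norm (u k))"
proof -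
  have "u k \<bullet> g k \<le> lam * norm (u k)" if "k \<in> K" for k
  proof -
    have "u k \<bullet> g k \<le> norm (u k) * norm (g k)" by (rule norm_cauchy_schwarz)
    also have "\<dots> \<le> norm (u k) * lam" using assms[OF that] by (simp add: mult_left_mono)
    finally show ?thesis by (simp add: mult.commute)
  qed
  then show ?thesis by (simp add: sum_distrib_left sum_mono)
qed

lemma inner_matrix_vector_mult_rows:
  fixes C :: "real^'n^'p" and d :: "real^'p"
  shows "d \<bullet> (C *v v) = (\<Sum>k\<in>UNIV. C $ k \<bullet> (d $ k *\<^sub>R v))"
  by (simp add: inner_vec_def matrix_vector_mult_def sum_distrib_left algebra_simps)

lemma double_sum_inner_matrix_vector_mult:
  fixes C :: "real^'n^'p" and d :: "'i \<Rightarrow> 'j \<Rightarrow> real^'p"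
  shows "(\<Sum>i\<in>I. \<Sum>j\<in>J. c i j * (d i j \<bullet> (C *v v i)))
       = (\<Sum>k\<in>UNIV. C $ k \<bullet> (\<Sum>i\<in>I. \<Sum>j\<in>J. (c i j * d i j $ k) *\<^sub>R v i))"
proof -
  have "(\<Sum>i\<in>I. \<Sum>j\<in>J. c i j * (d i j \<bullet> (C *v v i)))
      = (\<Sum>i\<in>I. \<Sum>j\<in>J. \<Sum>k\<in>UNIV. C $ k \<bullet> ((c i j * d i j $ k) *\<^sub>R v i))"
    by (simp add: inner_matrix_vector_mult_rows sum_distrib_left mult.assoc)
  also have "\<dots> = (\<Sum>k\<in>UNIV. \<Sum>i\<in>I. \<Sum>j\<in>J. C $ k \<bullet> ((c i j * d i j $ k) *\<^sub>R v i))"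
    by (simp add: sum.swap[where B = UNIV] sum.swap[where A = J])
  finally show ?thesis by (simp add: inner_sum_right)
qed

theorem theorem9:
  fixes x :: "'n::finite \<Rightarrow> real^'p::finite"
    and y :: "'n \<Rightarrow> real"
    and s lam :: real
    and Kf :: "real^'p \<Rightarrow> real^'p \<Rightarrow> real"
    and R :: "real^'n^'n"
  assumes "s > 0"
    and "mercer_kernel Kf"
    and "is_psd_sqrt R (gram Kf x)"
    and "lam > 0"
    and "lam \<ge> lambda_max s x y R"
  shows "\<forall>C :: real^'n^'p. Psi s lam x y R 0 \<le> Psi s lam x y R C"
proof
  fix C :: "real^'n^'p"
  define N where "N = 1 / (real CARD('n))\<^sup>2"
  define w where "w i j = gweight s (x i) (x j)" for i j
  define b where "b i j = (x j - x i) \<bullet> (C *v col_of R i)" for i j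
  define g where "g k = (2 * N) *\<^sub>R (\<Sum>i\<in>UNIV. \<Sum>j\<in>UNIV.
      (w i j * (y i - y j) * (x i $ k - x j $ k)) *\<^sub>R col_of R i)" for k
  have "norm (g k) \<le> lam" for k
  proof -
    have "norm (g k) \<le> lambda_max s x y R"
      unfolding lambda_max_def by (rule Max_ge) (auto simp: g_def N_def w_def)
    with assms(5) show ?thesis by simp
  qed
  then have penalty: "(\<Sum>k\<in>UNIV. C $ k \<bullet> g k) \<le> lam * (\<Sum>k\<in>UNIV. norm (C $ k))"
    by (rule sum_inner_le_sum_norm)
  have cross: "2 * N * (\<Sum>i\<in>UNIV. \<Sum>j\<in>UNIV. w i j * (y i - y j) * b i j)
      = - (\<Sum>k\<in>UNIV. C $ k \<bullet> g k)"
    using double_sum_inner_matrix_vector_mult[of "\<lambda>i j. w i j * (y i - y j)"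
        "\<lambda>i j. x j - x i" C "col_of R" UNIV UNIV]
    by (simp add: b_def g_def mult.assoc inner_sum_right sum_distrib_left sum_negf[symmetric]
        scaleR_sum_right algebra_simps)
  have "(\<Sum>j\<in>UNIV. w i j * (y i - y j)\<^sup>2) + 2 * (\<Sum>j\<in>UNIV. w i j * (y i - y j) * b i j)
      \<le> (\<Sum>j\<in>UNIV. w i j * (y i - y j + b i j)\<^sup>2)" for i
    by (rule weighted_sum_square_ge_linearization) (simp add: w_def gweight_def)
  then have "(\<Sum>i\<in>UNIV. \<Sum>j\<in>UNIV. w i j * (y i - y j)\<^sup>2)
          + 2 * (\<Sum>i\<in>UNIV. \<Sum>j\<in>UNIV. w i j * (y i - y j) * b i j)
      \<le> (\<Sum>i\<in>UNIV. \<Sum>j\<in>UNIV. w i j * (y i - y j + b i j)\<^sup>2)"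
    by (simp add: sum_mono sum.distrib[symmetric] sum_distrib_left)
  then have "N * ((\<Sum>i\<in>UNIV. \<Sum>j\<in>UNIV. w i j * (y i - y j)\<^sup>2)
          + 2 * (\<Sum>i\<in>UNIV. \<Sum>j\<in>UNIV. w i j * (y i - y j) * b i j))
      \<le> N * (\<Sum>i\<in>UNIV. \<Sum>j\<in>UNIV. w i j * (y i - y j + b i j)\<^sup>2)"
    by (rule mult_left_mono) (simp add: N_def)
  with cross have "N * (\<Sum>i\<in>UNIV. \<Sum>j\<in>UNIV. w i j * (y i - y j)\<^sup>2) - (\<Sum>k\<in>UNIV. C $ k \<bullet> g k)
      \<le> N * (\<Sum>i\<in>UNIV. \<Sum>j\<in>UNIV. w i j * (y i - y j + b i j)\<^sup>2)"
    by (simp add: distrib_left mult.assoc)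
  with penalty show "Psi s lam x y R 0 \<le> Psi s lam x y R C"
    by (simp add: Psi_def N_def w_def b_def)
qed

end
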